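(* Let $\mathfrak{U}$ be a Banach algebra. Then $\mathfrak{U}$ is symmetrically pseudo-amenable if and only if there exists a net $\{\mathbf{t}_\lambda\}_{\lambda\in\Lambda}$ in $\mathfrak{U}\widehat{\otimes}\mathfrak{U}$ such that for all $a\in\mathfrak{U}$: (i) $a\mathbf{t}_\lambda-\mathbf{t}_\lambda a\to 0$; (ii) $\pi(\mathbf{t}_\lambda)a\to a$; (iii) $a\circ\mathbf{t}_\lambda-\mathbf{t}_\lambda\circ a\to 0$; (iv) $a\,\pi^{\circ}(\mathbf{t}_\lambda)\to a$.
   Context: For a Banach algebra $\mathfrak{U}$, $\mathfrak{U}\widehat{\otimes}\mathfrak{U}$ is the projective tensor product, with the operations (defined on elementary tensors and extended linearly and continuously) $a(b\otimes c)=ab\otimes c$, $(b\otimes c)a=b\otimes ca$, $a\circ(b\otimes c)=b\otimes ac$, $(b\otimes c)\circ a=ba\otimes c$, and the bounded linear maps $\pi,\pi^\circ:\mathfrak{U}\widehat{\otimes}\mathfrak{U}\to\mathfrak{U}$ given by $\pi(b\otimes c)=bc$, $\pi^{\circ}(b\otimes c)=cb$. The flip map is $(b\otimes c)^{\circ}=c\otimes b$; an element $\mathbf{t}$ is symmetric if $\mathbf{t}^\circ=\mathbf{t}$. An approximate diagonal for $\mathfrak{U}$ is a net $\{\mathbf{t}_\lambda\}$ in $\mathfrak{U}\widehat{\otimes}\mathfrak{U}$ (not necessarily bounded) with $a\mathbf{t}_\lambda-\mathbf{t}_\lambda a\to0$ and $\pi(\mathbf{t}_\lambda)a\to a$ for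 all $a\in\mathfrak{U}$. $\mathfrak{U}$ is called symmetrically pseudo-amenable if it has an approximate diagonal consisting of symmetric elements. *)

theory Defs
  imports "HOL-Analysis.Analysis"
begin

text \<open>Elements of the projective tensor product U \<otimes>^ U are represented by
  sequences (b_n, c_n) with \<Sum> norm b_n * norm c_n < \<infinity>, standing for
  \<Sum> b_n \<otimes> c_n.  Two representations denote the same element iff every
  bounded bilinear form takes the same value on them (the dual of U \<otimes>^ U is
  the space of bounded bilinear forms).\<close>

type_synonym 'a ptrep = "nat \<Rightarrow> 'a \<times> 'a"

definition pt_valid :: "('a::real_normed_vector) ptrep \<Rightarrow> bool" where
  "pt_valid f \<longleftrightarrow> summable (\<lambda>n. norm (fst (f n)) * norm (snd (f n)))"

definition pt_eval :: "('a \<Rightarrow> 'a \<Rightarrow> real) \<Rightarrow> 'a ptrep \<Rightarrow> real" where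
  "pt_eval \<phi> f = (\<Sum>n. \<phi> (fst (f n)) (snd (f n)))"

definition pt_equiv :: "('a::real_normed_vector) ptrep \<Rightarrow> 'a ptrep \<Rightarrow> bool" where
  "pt_equiv f g \<longleftrightarrow> (\<forall>\<phi>::'a \<Rightarrow> 'a \<Rightarrow> real. bounded_bilinear \<phi> \<longrightarrow> pt_eval \<phi> f = pt_eval \<phi> g)"

definition pt_norm :: "('a::real_normed_vector) ptrep \<Rightarrow> real" where
  "pt_norm f = Inf {(\<Sum>n. norm (fst (g n)) * norm (snd (g n))) | g. pt_valid g \<and> pt_equiv f g}"

definition pt_diff :: "('a::real_normed_vector) ptrep \<Rightarrow> 'a ptrep \<Rightarrow> 'a ptrep" where
  "pt_diff f g = (\<lambda>n. if even n then f (n div 2) else (- fst (g (n div 2)), snd (g (n div 2))))"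

text \<open>Module operations: a(b\<otimes>c)=ab\<otimes>c, (b\<otimes>c)a=b\<otimes>ca,
  a\<circ>(b\<otimes>c)=b\<otimes>ac, (b\<otimes>c)\<circ>a=ba\<otimes>c.\<close>
definition pt_lmul :: "'a::real_normed_algebra \<Rightarrow> 'a ptrep \<Rightarrow> 'a ptrep" where
  "pt_lmul a f = (\<lambda>n. (a * fst (f n), snd (f n)))"
definition pt_rmul :: "'a ptrep \<Rightarrow> 'a::real_normed_algebra \<Rightarrow> 'a ptrep" where
  "pt_rmul f a = (\<lambda>n. (fst (f n), snd (f n) * a))"
definition pt_lcirc :: "'a::real_normed_algebra \<Rightarrow> 'a ptrep \<Rightarrow> 'a ptrep" where
  "pt_lcirc a f = (\<lambda>n. (fst (f n), a * snd (f n)))"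
definition pt_rcirc :: "'a ptrep \<Rightarrow> 'a::real_normed_algebra \<Rightarrow> 'a ptrep" where
  "pt_rcirc f a = (\<lambda>n. (fst (f n) * a, snd (f n)))"

definition pt_pi :: "('a::real_normed_algebra) ptrep \<Rightarrow> 'a" where
  "pt_pi f = (\<Sum>n. fst (f n) * snd (f n))"
definition pt_pio :: "('a::real_normed_algebra) ptrep \<Rightarrow> 'a" where
  "pt_pio f = (\<Sum>n. snd (f n) * fst (f n))"

definition pt_flip :: "'a ptrep \<Rightarrow> 'a ptrep" where
  "pt_flip f = (\<lambda>n. (snd (f n), fst (f n)))"

definition pt_symmetric :: "('a::real_normed_vector) ptrep \<Rightarrow> bool" where
  "pt_symmetric f \<longleftrightarrow> pt_equiv (pt_flip f) f"

text \<open>Nets are rendered as nets along a proper filter F (the Isabelle idiom for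
  nets).  The index type is fixed to the representation type itself, which is
  universal: a net (t_\<lambda>) can be replaced by the image filter of its tail filter
  under \<lambda> \<mapsto> t_\<lambda>.\<close>
definition approx_diagonal :: "('a ptrep \<Rightarrow> ('a::real_normed_algebra) ptrep) \<Rightarrow> 'a ptrep filter \<Rightarrow> bool" where
  "approx_diagonal t F \<longleftrightarrow> F \<noteq> bot \<and> (\<forall>i. pt_valid (t i)) \<and>
     (\<forall>a. ((\<lambda>i. pt_norm (pt_diff (pt_lmul a (t i)) (pt_rmul (t i) a))) \<longlongrightarrow> 0) F) \<and>
     (\<forall>a. ((\<lambda>i. pt_pi (t i) * a) \<longlongrightarrow> a) F)"

definition symm_pseudo_amenable :: "'a::{real_normed_algebra,banach} itself \<Rightarrow> bool" where
  "symm_pseudo_amenable _ \<longleftrightarrow>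
     (\<exists>(t::'a ptrep \<Rightarrow> 'a ptrep) F. approx_diagonal t F \<and> (\<forall>i. pt_symmetric (t i)))"

end

theory Submission
  imports Defs
begin

text \<open>If t is symmetric, the flip u \<mapsto> u\<degree> fixes t, preserves the projective norm,
  carries the module actions a(-), (-)a to a\<circ>(-), (-)\<circ>a up to sign, and turns
  \<pi> into \<pi>\<degree>; hence (iii) and (iv) follow from (i) and (ii). Conversely, given (i)--(iv),
  the symmetrizations (t + t\<degree>)/2 are symmetric, their commutators are bounded by
  those in (i) and (iii), and \<pi>\<degree>(t) a \<rightarrow> a by (iii) and (iv), which together
  with (ii) gives \<pi>((t + t\<degree>)/2) a \<rightarrow> a.

  Elements of the tensor product are represented by sequences and identified when all
  real bounded bilinear forms agree on them, so the well-definedness of \<pi> and the bound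
  norm (\<pi> u) \<le> norm u require the Hahn--Banach theorem for real normed spaces.\<close>

section \<open>Hahn--Banach for real normed spaces\<close>

definition dominated_linear_graph :: "('a::real_normed_vector \<times> real) set \<Rightarrow> bool" where
  "dominated_linear_graph G \<longleftrightarrow>
     (\<forall>x a b. (x, a) \<in> G \<longrightarrow> (x, b) \<in> G \<longrightarrow> a = b) \<and>
     (\<forall>x a y b. (x, a) \<in> G \<longrightarrow> (y, b) \<in> G \<longrightarrow> (x + y, a + b) \<in> G) \<and>
     (\<forall>x a c. (x, a) \<in> G \<longrightarrow> (c *\<^sub>R x, c * a) \<in> G) \<and>
     (\<forall>x a. (x, a) \<in> G \<longrightarrow> a \<le> norm x)"

lemma dominated_linear_graphD:
  assumes "dominated_linear_graph G"
  shows dominated_linear_graph_unique: "\<And>x a b. (x, a) \<in> G \<Longrightarrow> (x, b) \<in> G \<Longrightarrow> a = b"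
    and dominated_linear_graph_add: "\<And>x a y b. (x, a) \<in> G \<Longrightarrow> (y, b) \<in> G \<Longrightarrow> (x + y, a + b) \<in> G"
    and dominated_linear_graph_scaleR: "\<And>x a c. (x, a) \<in> G \<Longrightarrow> (c *\<^sub>R x, c * a) \<in> G"
    and dominated_linear_graph_le_norm: "\<And>x a. (x, a) \<in> G \<Longrightarrow> a \<le> norm x"
  using assms unfolding dominated_linear_graph_def by blast+

lemma dominated_linear_graph_zero:
  assumes "dominated_linear_graph G" "G \<noteq> {}"
  shows "(0, 0) \<in> G"
  using assms dominated_linear_graph_scaleR[OF assms(1), of _ _ 0] by fastforce

text \<open>The value c to be assigned to a new direction y: by the triangle inequality every
  lower bound a - norm (x - y) lies below every upper bound norm (w + y) - b.\<close>
lemma dominated_linear_graph_extension_value: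
  assumes G: "dominated_linear_graph G" "G \<noteq> {}"
  obtains c where "\<And>x a. (x, a) \<in> G \<Longrightarrow> a - norm (x - y) \<le> c"
    and "\<And>x a. (x, a) \<in> G \<Longrightarrow> c \<le> norm (x + y) - a"
proof -
  have lower_le_upper: "a - norm (x - y) \<le> norm (w + y) - b" if "(x, a) \<in> G" "(w, b) \<in> G" for x a w b
  proof -
    have "a + b \<le> norm (x + w)"
      using dominated_linear_graph_le_norm[OF G(1) dominated_linear_graph_add[OF G(1) that]] .
    also have "\<dots> \<le> norm (x - y) + norm (w + y)"
      using norm_triangle_ineq[of "x - y" "w + y"] by simp
    finally show ?thesis by simp
  qed
  define S where "S = {a - norm (x - y) | x a. (x, a) \<in> G}"
  have "S \<noteq> {}" using dominated_linear_graph_zero[OF G] unfolding S_def by blast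
  have "bdd_above S"
    unfolding S_def bdd_above_def
    using lower_le_upper[OF _ dominated_linear_graph_zero[OF G]] by fastforce
  show ?thesis
  proof (rule that)
    show "a - norm (x - y) \<le> Sup S" if "(x, a) \<in> G" for x a
      using that by (intro cSup_upper[OF _ \<open>bdd_above S\<close>]) (auto simp: S_def)
    show "Sup S \<le> norm (x + y) - a" if "(x, a) \<in> G" for x a
      using that by (intro cSup_least[OF \<open>S \<noteq> {}\<close>]) (auto simp: S_def lower_le_upper)
  qed
qed

lemma dominated_linear_graph_extension_le_norm:
  assumes G: "dominated_linear_graph G" and xa: "(x, a) \<in> G"
    and lower: "\<And>x a. (x, a) \<in> G \<Longrightarrow> a - norm (x - y) \<le> c"
    and upper: "\<And>x a. (x, a) \<in> G \<Longrightarrow> c \<le> norm (x + y) - a"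
  shows "a + t * c \<le> norm (x + t *\<^sub>R y)"
proof (cases t "0::real" rule: linorder_cases)
  case less
  define s where "s = - t"
  have s: "s > 0" "t = - s" using less by (simp_all add: s_def)
  have "(1 / s) * a - norm ((1 / s) *\<^sub>R x - y) \<le> c"
    using lower[OF dominated_linear_graph_scaleR[OF G xa]] .
  then have "s * ((1 / s) * a - norm ((1 / s) *\<^sub>R x - y)) \<le> s * c"
    using s(1) by (simp only: mult_left_mono less_imp_le)
  moreover have "s * ((1 / s) * a - norm ((1 / s) *\<^sub>R x - y)) = a - norm (s *\<^sub>R ((1 / s) *\<^sub>R x - y))"
    using s(1) by (simp add: right_diff_distrib)
  moreover have "s *\<^sub>R ((1 / s) *\<^sub>R x - y) = x + t *\<^sub>R y"
    using s by (simp add: scaleR_diff_right)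
  ultimately have "a - norm (x + t *\<^sub>R y) \<le> s * c" by simp
  moreover have "t * c = - (s * c)" using s(2) by simp
  ultimately show ?thesis by linarith
next
  case equal
  then show ?thesis using dominated_linear_graph_le_norm[OF G xa] by simp
next
  case greater
  have "c \<le> norm ((1 / t) *\<^sub>R x + y) - (1 / t) * a"
    using upper[OF dominated_linear_graph_scaleR[OF G xa]] .
  then have "t * c \<le> t * (norm ((1 / t) *\<^sub>R x + y) - (1 / t) * a)"
    using greater by (simp only: mult_left_mono less_imp_le)
  moreover have "t * (norm ((1 / t) *\<^sub>R x + y) - (1 / t) * a) = norm (t *\<^sub>R ((1 / t) *\<^sub>R x + y)) - a"
    using greater by (simp add: right_diff_distrib)
  moreover have "t *\<^sub>R ((1 / t) *\<^sub>R x + y) = x + t *\<^sub>R y"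
    using greater by (simp add: scaleR_add_right)
  ultimately show ?thesis by simp
qed

lemma dominated_linear_graph_decomposition_unique:
  assumes G: "dominated_linear_graph G" and y: "y \<notin> fst ` G"
    and "(x, a) \<in> G" "(x', a') \<in> G" and eq: "x + t *\<^sub>R y = x' + t' *\<^sub>R y"
  shows "t = t'" "x = x'"
proof -
  show "t = t'"
  proof (rule ccontr)
    assume "t \<noteq> t'"
    have "(x + (-1) *\<^sub>R x', a + (-1) * a') \<in> G"
      using assms(3,4) dominated_linear_graph_add[OF G] dominated_linear_graph_scaleR[OF G] by blast
    then have "((1 / (t' - t)) *\<^sub>R (x + (-1) *\<^sub>R x'), (1 / (t' - t)) * (a + (-1) * a')) \<in> G"
      by (rule dominated_linear_graph_scaleR[OF G])
    moreover have "x - x' = (t' - t) *\<^sub>R y" using eq by (simp add: algebra_simps)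
    then have "(1 / (t' - t)) *\<^sub>R (x + (-1) *\<^sub>R x') = y"
      using \<open>t \<noteq> t'\<close> by simp
    ultimately have "(y, (1 / (t' - t)) * (a + (-1) * a')) \<in> G" by simp
    then have "y \<in> fst ` G" by (rule rev_image_eqI) simp
    with y show False by contradiction
  qed
  then show "x = x'" using eq by simp
qed

lemma dominated_linear_graph_extend:
  assumes G: "dominated_linear_graph G" "G \<noteq> {}" and y: "y \<notin> fst ` G"
  obtains G' where "dominated_linear_graph G'" "G \<subset> G'"
proof -
  obtain c where lower: "\<And>x a. (x, a) \<in> G \<Longrightarrow> a - norm (x - y) \<le> c"
    and upper: "\<And>x a. (x, a) \<in> G \<Longrightarrow> c \<le> norm (x + y) - a"
    using dominated_linear_graph_extension_value[OF G] by blast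
  define G' where "G' = {(x + t *\<^sub>R y, a + t * c) | x a t. (x, a) \<in> G}"
  have G'I: "(x + t *\<^sub>R y, a + t * c) \<in> G'" if "(x, a) \<in> G" for x a t
    unfolding G'_def using that by blast
  have "dominated_linear_graph G'"
    unfolding dominated_linear_graph_def
  proof (intro conjI allI impI)
    fix u p q assume "(u, p) \<in> G'" "(u, q) \<in> G'"
    then obtain x a t x' a' t' where "(x, a) \<in> G" "(x', a') \<in> G"
      and "u = x + t *\<^sub>R y" "u = x' + t' *\<^sub>R y" "p = a + t * c" "q = a' + t' * c"
      unfolding G'_def by blast
    with dominated_linear_graph_decomposition_unique[OF G(1) y, of x a x' a' t t']
      dominated_linear_graph_unique[OF G(1)]
    show "p = q" by auto
  next
    fix u p v q assume "(u, p) \<in> G'" "(v, q) \<in> G'"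
    then obtain x a t x' a' t' where "(x, a) \<in> G" "(x', a') \<in> G"
      and "u = x + t *\<^sub>R y" "p = a + t * c" "v = x' + t' *\<^sub>R y" "q = a' + t' * c"
      unfolding G'_def by blast
    moreover have "(x + x', a + a') \<in> G"
      using dominated_linear_graph_add[OF G(1)] calculation(1,2) .
    ultimately show "(u + v, p + q) \<in> G'"
      using G'I[of "x + x'" "a + a'" "t + t'"] by (simp add: algebra_simps)
  next
    fix u p d assume "(u, p) \<in> G'"
    then obtain x a t where "(x, a) \<in> G" "u = x + t *\<^sub>R y" "p = a + t * c"
      unfolding G'_def by blast
    moreover have "(d *\<^sub>R x, d * a) \<in> G"
      using dominated_linear_graph_scaleR[OF G(1)] calculation(1) .
    ultimately show "(d *\<^sub>R u, d * p) \<in> G'"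
      using G'I[of "d *\<^sub>R x" "d * a" "d * t"] by (simp add: algebra_simps)
  next
    fix u p assume "(u, p) \<in> G'"
    then obtain x a t where "(x, a) \<in> G" "u = x + t *\<^sub>R y" "p = a + t * c"
      unfolding G'_def by blast
    then show "p \<le> norm u"
      using dominated_linear_graph_extension_le_norm[OF G(1) _ lower upper] by simp
  qed
  moreover have "G \<subseteq> G'"
    using G'I[of _ _ 0] by auto
  moreover have "(y, c) \<in> G'"
    using G'I[OF dominated_linear_graph_zero[OF G], of 1] by simp
  then have "G' \<noteq> G" using y by force
  ultimately show ?thesis using that by blast
qed

lemma dominated_linear_graph_Union_chain:
  assumes C: "C \<in> chains A" and dlg: "\<And>G. G \<in> C \<Longrightarrow> dominated_linear_graph G"
  shows "dominated_linear_graph (\<Union>C)"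
proof -
  have in_common: "\<exists>G\<in>C. p \<in> G \<and> q \<in> G" if pq: "p \<in> \<Union>C" "q \<in> \<Union>C" for p q
  proof -
    obtain G H where "G \<in> C" "H \<in> C" "p \<in> G" "q \<in> H" using pq by blast
    then show ?thesis using chainsD[OF C \<open>G \<in> C\<close> \<open>H \<in> C\<close>] by blast
  qed
  show ?thesis
    unfolding dominated_linear_graph_def
  proof (intro conjI allI impI)
    fix x a b assume "(x, a) \<in> \<Union>C" "(x, b) \<in> \<Union>C"
    with in_common obtain G where "G \<in> C" "(x, a) \<in> G" "(x, b) \<in> G" by blast
    then show "a = b" using dominated_linear_graph_unique[OF dlg] by blast
  next
    fix x a y b assume "(x, a) \<in> \<Union>C" "(y, b) \<in> \<Union>C"
    with in_common obtain G where "G \<in> C" "(x, a) \<in> G" "(y, b) \<in> G" by blast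
    then show "(x + y, a + b) \<in> \<Union>C" using dominated_linear_graph_add[OF dlg] by blast
  next
    fix x a c assume "(x, a) \<in> \<Union>C"
    then obtain G where "G \<in> C" "(x, a) \<in> G" by blast
    then show "(c *\<^sub>R x, c * a) \<in> \<Union>C" using dominated_linear_graph_scaleR[OF dlg] by blast
  next
    fix x a assume "(x, a) \<in> \<Union>C"
    then obtain G where "G \<in> C" "(x, a) \<in> G" by blast
    then show "a \<le> norm x" using dominated_linear_graph_le_norm[OF dlg] by blast
  qed
qed

lemma dominated_linear_graph_total_bounded_linear:
  fixes G :: "('a::real_normed_vector \<times> real) set"
  assumes G: "dominated_linear_graph G" and total: "\<And>x. \<exists>a. (x, a) \<in> G"
  obtains l :: "'a \<Rightarrow> real" where "bounded_linear l" "\<And>x. (x, l x) \<in> G"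
proof -
  define l where "l x = (THE a. (x, a) \<in> G)" for x
  have l_graph: "(x, l x) \<in> G" for x
    unfolding l_def using total[of x] dominated_linear_graph_unique[OF G] by (metis theI)
  have l_eq: "l x = a" if "(x, a) \<in> G" for x a
    using dominated_linear_graph_unique[OF G l_graph that] .
  have "bounded_linear l"
  proof (rule bounded_linear_intro[where K = 1])
    show "l (x + y) = l x + l y" for x y
      using l_eq[OF dominated_linear_graph_add[OF G l_graph l_graph]] .
    show "l (r *\<^sub>R x) = r *\<^sub>R l x" for r x
      using l_eq[OF dominated_linear_graph_scaleR[OF G l_graph]] by simp
    show "norm (l x) \<le> norm x * 1" for x
    proof -
      have "l (- x) = - l x"
        using l_eq[OF dominated_linear_graph_scaleR[OF G l_graph[of x], where c = "-1"]] by simp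
      then show ?thesis
        using dominated_linear_graph_le_norm[OF G l_graph, of x]
          dominated_linear_graph_le_norm[OF G l_graph, of "- x"] by simp
    qed
  qed
  then show ?thesis using that l_graph by blast
qed

lemma dominated_linear_graph_line:
  "dominated_linear_graph {(c *\<^sub>R z, c * norm z) | c. True}" (is "dominated_linear_graph ?L")
proof -
  have L: "(x, a) \<in> ?L \<longleftrightarrow> (\<exists>c. x = c *\<^sub>R z \<and> a = c * norm z)" for x a
    by auto
  show ?thesis
    unfolding dominated_linear_graph_def L
  proof (intro conjI allI impI; elim exE conjE)
    fix x a b c d
    assume "x = c *\<^sub>R z" "a = c * norm z" "x = d *\<^sub>R z" "b = d * norm z"
    then show "a = b" by (cases "z = 0") auto
  next
    fix x a y b c d
    assume "x = c *\<^sub>R z" "a = c * norm z" "y = d *\<^sub>R z" "b = d * norm z"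
    then show "\<exists>e. x + y = e *\<^sub>R z \<and> a + b = e * norm z"
      by (intro exI[of _ "c + d"]) (simp add: algebra_simps)
  next
    fix x a r c
    assume "x = c *\<^sub>R z" "a = c * norm z"
    then show "\<exists>e. r *\<^sub>R x = e *\<^sub>R z \<and> r * a = e * norm z"
      by (intro exI[of _ "r * c"]) simp
  next
    fix x a c
    assume "x = c *\<^sub>R z" "a = c * norm z"
    then show "a \<le> norm x" by (simp add: mult_right_mono)
  qed
qed

text \<open>Hahn--Banach, proved by Zorn's lemma on norm-dominated linear functionals
  (represented by their graphs) that take the value norm z at z.\<close>
lemma exists_bounded_linear_functional_nonzero:
  fixes z :: "'a::real_normed_vector"
  assumes "z \<noteq> 0"
  obtains l :: "'a \<Rightarrow> real" where "bounded_linear l" "l z \<noteq> 0"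
proof -
  define A where "A = {G. dominated_linear_graph G \<and> (z, norm z) \<in> G}"
  have "(z, norm z) = (1 *\<^sub>R z, 1 * norm z)" by simp
  then have line: "{(c *\<^sub>R z, c * norm z) | c. True} \<in> A"
    unfolding A_def using dominated_linear_graph_line by blast
  have "\<exists>U\<in>A. \<forall>X\<in>C. X \<subseteq> U" if C: "C \<in> chains A" for C
  proof (cases "C = {}")
    case True
    then show ?thesis using line by blast
  next
    case False
    have "dominated_linear_graph (\<Union>C)"
      using dominated_linear_graph_Union_chain[OF C] chainsD2[OF C] unfolding A_def by blast
    moreover have "(z, norm z) \<in> \<Union>C"
      using False chainsD2[OF C] unfolding A_def by blast
    ultimately show ?thesis unfolding A_def by blast
  qed
  then have "\<exists>M\<in>A. \<forall>X\<in>A. M \<subseteq> X \<longrightarrow> X = M"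
    by (intro Zorn_Lemma2) blast
  then obtain M where "M \<in> A" and M_max: "\<And>X. X \<in> A \<Longrightarrow> M \<subseteq> X \<Longrightarrow> X = M"
    by blast
  then have M: "dominated_linear_graph M" "(z, norm z) \<in> M"
    unfolding A_def by auto
  have total: "\<exists>a. (x, a) \<in> M" for x
  proof (rule ccontr)
    assume "\<nexists>a. (x, a) \<in> M"
    then have "x \<notin> fst ` M" by force
    moreover have "M \<noteq> {}" using M(2) by blast
    ultimately obtain M' where "dominated_linear_graph M'" "M \<subset> M'"
      using dominated_linear_graph_extend[OF M(1)] by blast
    then have "M' \<in> A" using M(2) unfolding A_def by blast
    with M_max[of M'] \<open>M \<subset> M'\<close> show False by blast
  qed
  obtain l :: "'a \<Rightarrow> real" where "bounded_linear l" "\<And>x. (x, l x) \<in> M"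
    using dominated_linear_graph_total_bounded_linear[OF M(1) total] by blast
  moreover have "l z = norm z"
    using dominated_linear_graph_unique[OF M(1) \<open>(z, l z) \<in> M\<close> M(2)] .
  ultimately show ?thesis using that[of l] assms by simp
qed

lemma eq_if_bounded_linear_functionals_eq:
  fixes x y :: "'a::real_normed_vector"
  assumes "\<And>l :: 'a \<Rightarrow> real. bounded_linear l \<Longrightarrow> l x = l y"
  shows "x = y"
proof (rule ccontr)
  assume "x \<noteq> y"
  then have "x - y \<noteq> 0" by simp
  then obtain l :: "'a \<Rightarrow> real" where l: "bounded_linear l" "l (x - y) \<noteq> 0"
    by (rule exists_bounded_linear_functional_nonzero)
  have "l (x - y) = l x - l y"
    by (rule linear_diff[OF bounded_linear.linear[OF l(1)]])
  with l(2) assms[OF l(1)] show False by simp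
qed

section \<open>Representations of the projective tensor product\<close>

definition pt_add :: "'a ptrep \<Rightarrow> 'a ptrep \<Rightarrow> 'a ptrep" where
  "pt_add f g = (\<lambda>n. if even n then f (n div 2) else g (n div 2))"

definition pt_neg :: "('a::real_normed_vector) ptrep \<Rightarrow> 'a ptrep" where
  "pt_neg f = (\<lambda>n. (- fst (f n), snd (f n)))"

definition pt_scale :: "real \<Rightarrow> ('a::real_normed_vector) ptrep \<Rightarrow> 'a ptrep" where
  "pt_scale c f = (\<lambda>n. (c *\<^sub>R fst (f n), snd (f n)))"

definition pt_lift :: "('a \<Rightarrow> 'a \<Rightarrow> 'b::real_normed_vector) \<Rightarrow> 'a ptrep \<Rightarrow> 'b" where
  "pt_lift B f = (\<Sum>n. B (fst (f n)) (snd (f n)))"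

definition pt_rep_norm :: "('a::real_normed_vector) ptrep \<Rightarrow> real" where
  "pt_rep_norm f = (\<Sum>n. norm (fst (f n)) * norm (snd (f n)))"

abbreviation pt_commutator :: "'a::real_normed_algebra \<Rightarrow> 'a ptrep \<Rightarrow> 'a ptrep" where
  "pt_commutator a t \<equiv> pt_diff (pt_lmul a t) (pt_rmul t a)"

abbreviation pt_circ_commutator :: "'a::real_normed_algebra \<Rightarrow> 'a ptrep \<Rightarrow> 'a ptrep" where
  "pt_circ_commutator a t \<equiv> pt_diff (pt_lcirc a t) (pt_rcirc t a)"

lemma pt_diff_eq_add_neg: "pt_diff f g = pt_add f (pt_neg g)"
  by (auto simp: pt_diff_def pt_add_def pt_neg_def)

lemma pt_flip_flip [simp]: "pt_flip (pt_flip f) = f"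
  by (simp add: pt_flip_def)

lemma pt_flip_add: "pt_flip (pt_add f g) = pt_add (pt_flip f) (pt_flip g)"
  by (auto simp: pt_flip_def pt_add_def)

lemma pt_lmul_add: "pt_lmul a (pt_add f g) = pt_add (pt_lmul a f) (pt_lmul a g)"
  by (auto simp: pt_lmul_def pt_add_def)

lemma pt_rmul_add: "pt_rmul (pt_add f g) a = pt_add (pt_rmul f a) (pt_rmul g a)"
  by (auto simp: pt_rmul_def pt_add_def)

lemma pt_neg_add: "pt_neg (pt_add f g) = pt_add (pt_neg f) (pt_neg g)"
  by (auto simp: pt_neg_def pt_add_def)

lemma pt_commutator_scale: "pt_commutator a (pt_scale c t) = pt_scale c (pt_commutator a t)"
  by (auto simp: pt_diff_def pt_lmul_def pt_rmul_def pt_scale_def)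

lemma pt_circ_commutator_scale: "pt_circ_commutator a (pt_scale c t) = pt_scale c (pt_circ_commutator a t)"
  by (auto simp: pt_diff_def pt_lcirc_def pt_rcirc_def pt_scale_def)

lemma sums_interleave:
  fixes u v :: "nat \<Rightarrow> 'b::real_normed_vector"
  assumes "u sums U" "v sums V"
  shows "(\<lambda>n. if even n then u (n div 2) else v (n div 2)) sums (U + V)"
proof -
  define u' where "u' n = (if even n then u (n div 2) else 0)" for n
  define v' where "v' n = (if even n then 0 else v (n div 2))" for n
  have "u' sums U"
  proof (rule sums_mono_reindex[THEN iffD1, of "\<lambda>n. 2 * n"])
    show "strict_mono (\<lambda>n::nat. 2 * n)" by (auto simp: strict_mono_def)
    show "u' n = 0" if "n \<notin> range (\<lambda>n::nat. 2 * n)" for n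
      using that by (auto simp: u'_def elim: evenE)
    show "(\<lambda>n. u' (2 * n)) sums U" using assms(1) by (simp add: u'_def)
  qed
  moreover have "v' sums V"
  proof (rule sums_mono_reindex[THEN iffD1, of "\<lambda>n. 2 * n + 1"])
    show "strict_mono (\<lambda>n::nat. 2 * n + 1)" by (auto simp: strict_mono_def)
    show "v' n = 0" if "n \<notin> range (\<lambda>n::nat. 2 * n + 1)" for n
      using that by (auto simp: v'_def elim: oddE)
    show "(\<lambda>n. v' (2 * n + 1)) sums V" using assms(2) by (simp add: v'_def)
  qed
  ultimately have "(\<lambda>n. u' n + v' n) sums (U + V)" by (rule sums_add)
  moreover have "(\<lambda>n. u' n + v' n) = (\<lambda>n. if even n then u (n div 2) else v (n div 2))"
    by (auto simp: u'_def v'_def)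
  ultimately show ?thesis by simp
qed

lemma sums_pt_add:
  fixes h :: "'a \<times> 'a \<Rightarrow> 'b::real_normed_vector"
  assumes "summable (\<lambda>n. h (f n))" "summable (\<lambda>n. h (g n))"
  shows "(\<lambda>n. h (pt_add f g n)) sums ((\<Sum>n. h (f n)) + (\<Sum>n. h (g n)))"
  using sums_interleave[OF summable_sums[OF assms(1)] summable_sums[OF assms(2)]]
  by (simp add: pt_add_def if_distrib)

lemma pt_valid_map:
  assumes p: "bounded_linear p" and q: "bounded_linear q" and f: "pt_valid f"
  shows "pt_valid (\<lambda>n. (p (fst (f n)), q (snd (f n))))"
proof -
  obtain K L where K: "\<And>x. norm (p x) \<le> norm x * K" and L: "\<And>y. norm (q y) \<le> norm y * L"
    using bounded_linear.bounded[OF p] bounded_linear.bounded[OF q] by metis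
  have "norm (p x) * norm (q y) \<le> (norm x * K) * (norm y * L)" for x y
    using order_trans[OF norm_ge_zero K] by (intro mult_mono[OF K L]) simp_all
  then have bound: "norm (norm (p (fst (f n))) * norm (q (snd (f n))))
      \<le> K * L * (norm (fst (f n)) * norm (snd (f n)))" for n
    by (simp add: ac_simps)
  have "summable (\<lambda>n. K * L * (norm (fst (f n)) * norm (snd (f n))))"
    using f unfolding pt_valid_def by (rule summable_mult)
  then show ?thesis
    unfolding pt_valid_def prod.sel by (rule summable_comparison_test') (rule bound)
qed

lemma pt_valid_lmul [simp]: "pt_valid f \<Longrightarrow> pt_valid (pt_lmul a f)"
  unfolding pt_lmul_def using pt_valid_map[OF bounded_linear_mult_right bounded_linear_ident] .

lemma pt_valid_rmul [simp]: "pt_valid f \<Longrightarrow> pt_valid (pt_rmul f a)"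
  unfolding pt_rmul_def using pt_valid_map[OF bounded_linear_ident bounded_linear_mult_left] .

lemma pt_valid_lcirc [simp]: "pt_valid f \<Longrightarrow> pt_valid (pt_lcirc a f)"
  unfolding pt_lcirc_def using pt_valid_map[OF bounded_linear_ident bounded_linear_mult_right] .

lemma pt_valid_rcirc [simp]: "pt_valid f \<Longrightarrow> pt_valid (pt_rcirc f a)"
  unfolding pt_rcirc_def using pt_valid_map[OF bounded_linear_mult_left bounded_linear_ident] .

lemma pt_valid_neg [simp]: "pt_valid f \<Longrightarrow> pt_valid (pt_neg f)"
  unfolding pt_neg_def
  using pt_valid_map[OF bounded_linear_minus[OF bounded_linear_ident] bounded_linear_ident] .

lemma pt_valid_scale [simp]: "pt_valid f \<Longrightarrow> pt_valid (pt_scale c f)"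
  unfolding pt_scale_def using pt_valid_map[OF bounded_linear_scaleR_right bounded_linear_ident] .

lemma pt_valid_flip [simp]: "pt_valid f \<Longrightarrow> pt_valid (pt_flip f)"
  unfolding pt_valid_def pt_flip_def by (simp add: mult.commute)

lemma pt_valid_add [simp]: "pt_valid f \<Longrightarrow> pt_valid g \<Longrightarrow> pt_valid (pt_add f g)"
  unfolding pt_valid_def
  using sums_summable[OF sums_pt_add[of "\<lambda>p. norm (fst p) * norm (snd p)" f g]] by simp

lemma pt_valid_diff [simp]: "pt_valid f \<Longrightarrow> pt_valid g \<Longrightarrow> pt_valid (pt_diff f g)"
  by (simp add: pt_diff_eq_add_neg)

lemma summable_pt_lift:
  fixes B :: "'a::real_normed_vector \<Rightarrow> 'a \<Rightarrow> 'b::banach"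
  assumes "bounded_bilinear B" "pt_valid f"
  shows "summable (\<lambda>n. B (fst (f n)) (snd (f n)))"
proof -
  obtain K where K: "\<And>x y. norm (B x y) \<le> norm x * norm y * K"
    using bounded_bilinear.bounded[OF assms(1)] by blast
  have "summable (\<lambda>n. norm (fst (f n)) * norm (snd (f n)) * K)"
    using assms(2) unfolding pt_valid_def by (rule summable_mult2)
  then show ?thesis
    by (rule summable_comparison_test') (rule K)
qed

lemma pt_lift_add:
  fixes B :: "'a::real_normed_vector \<Rightarrow> 'a \<Rightarrow> 'b::banach"
  assumes "bounded_bilinear B" "pt_valid f" "pt_valid g"
  shows "pt_lift B (pt_add f g) = pt_lift B f + pt_lift B g"
  using sums_pt_add[of "\<lambda>p. B (fst p) (snd p)" f g] summable_pt_lift[OF assms(1)] assms(2,3)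
  by (simp add: pt_lift_def sums_iff)

lemma pt_lift_neg:
  fixes B :: "'a::real_normed_vector \<Rightarrow> 'a \<Rightarrow> 'b::banach"
  assumes "bounded_bilinear B" "pt_valid f"
  shows "pt_lift B (pt_neg f) = - pt_lift B f"
  using suminf_minus[OF summable_pt_lift[OF assms]]
  by (simp add: pt_lift_def pt_neg_def bounded_bilinear.minus_left[OF assms(1)])

lemma pt_lift_scale:
  fixes B :: "'a::real_normed_vector \<Rightarrow> 'a \<Rightarrow> 'b::banach"
  assumes "bounded_bilinear B" "pt_valid f"
  shows "pt_lift B (pt_scale c f) = c *\<^sub>R pt_lift B f"
  using suminf_scaleR_right[OF summable_pt_lift[OF assms], of c]
  by (simp add: pt_lift_def pt_scale_def bounded_bilinear.scaleR_left[OF assms(1)])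

lemma pt_lift_diff:
  fixes B :: "'a::real_normed_vector \<Rightarrow> 'a \<Rightarrow> 'b::banach"
  assumes "bounded_bilinear B" "pt_valid f" "pt_valid g"
  shows "pt_lift B (pt_diff f g) = pt_lift B f - pt_lift B g"
  using assms by (simp add: pt_diff_eq_add_neg pt_lift_add pt_lift_neg)

lemma pt_lift_flip: "pt_lift B (pt_flip f) = pt_lift (\<lambda>x y. B y x) f"
  by (simp add: pt_lift_def pt_flip_def)

lemma pt_lift_map:
  "pt_lift B (\<lambda>n. (p (fst (f n)), q (snd (f n)))) = pt_lift (\<lambda>x y. B (p x) (q y)) f"
  by (simp add: pt_lift_def)

lemma pt_equiv_iff_lift:
  fixes f g :: "'a::real_normed_vector ptrep"
  shows "pt_equiv f g \<longleftrightarrow>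
    (\<forall>\<phi> :: 'a \<Rightarrow> 'a \<Rightarrow> real. bounded_bilinear \<phi> \<longrightarrow> pt_lift \<phi> f = pt_lift \<phi> g)"
  by (simp add: pt_equiv_def pt_eval_def pt_lift_def)

lemma bounded_bilinear_compose_bounded_linear:
  assumes l: "bounded_linear l" and B: "bounded_bilinear B"
  shows "bounded_bilinear (\<lambda>x y. l (B x y))"
proof -
  interpret l: bounded_linear l by fact
  interpret B: bounded_bilinear B by fact
  obtain K where K: "\<And>x. norm (l x) \<le> norm x * K" "K > 0" using l.pos_bounded by blast
  obtain L where L: "\<And>x y. norm (B x y) \<le> norm x * norm y * L" using B.bounded by blast
  have "norm (l (B x y)) \<le> norm x * norm y * (L * K)" for x y
    using order_trans[OF K(1) mult_right_mono[OF L less_imp_le[OF K(2)]]] by (simp add: ac_simps)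
  then show ?thesis
    by unfold_locales
      (auto simp: B.add_left B.add_right B.scaleR_left B.scaleR_right l.add l.scaleR)
qed

text \<open>Real bilinear forms determine the value of every lifted bounded bilinear map,
  by Hahn--Banach in its target.\<close>
lemma pt_lift_equiv:
  fixes B :: "'a::real_normed_vector \<Rightarrow> 'a \<Rightarrow> 'b::banach"
  assumes B: "bounded_bilinear B" and "pt_valid f" "pt_valid g" "pt_equiv f g"
  shows "pt_lift B f = pt_lift B g"
proof (rule eq_if_bounded_linear_functionals_eq)
  fix l :: "'b \<Rightarrow> real" assume l: "bounded_linear l"
  have "l (pt_lift B h) = pt_lift (\<lambda>x y. l (B x y)) h" if "pt_valid h" for h
    unfolding pt_lift_def by (rule bounded_linear.suminf[OF l summable_pt_lift[OF B that]])
  then show "l (pt_lift B f) = l (pt_lift B g)"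
    using assms(2-4) bounded_bilinear_compose_bounded_linear[OF l B]
    by (simp add: pt_equiv_iff_lift)
qed

lemma pt_equiv_map:
  assumes "bounded_linear p" "bounded_linear q" "pt_equiv f g"
  shows "pt_equiv (\<lambda>n. (p (fst (f n)), q (snd (f n)))) (\<lambda>n. (p (fst (g n)), q (snd (g n))))"
  using assms(3) bounded_bilinear.comp[OF _ assms(1,2)]
  unfolding pt_equiv_iff_lift pt_lift_map by blast

lemma pt_equiv_lmul: "pt_equiv f g \<Longrightarrow> pt_equiv (pt_lmul a f) (pt_lmul a g)"
  unfolding pt_lmul_def by (rule pt_equiv_map[OF bounded_linear_mult_right bounded_linear_ident])

lemma pt_equiv_rmul: "pt_equiv f g \<Longrightarrow> pt_equiv (pt_rmul f a) (pt_rmul g a)"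
  unfolding pt_rmul_def by (rule pt_equiv_map[OF bounded_linear_ident bounded_linear_mult_left])

lemma pt_equiv_neg: "pt_equiv f g \<Longrightarrow> pt_equiv (pt_neg f) (pt_neg g)"
  unfolding pt_neg_def
  by (rule pt_equiv_map[OF bounded_linear_minus[OF bounded_linear_ident] bounded_linear_ident])

lemma pt_equiv_scale: "pt_equiv f g \<Longrightarrow> pt_equiv (pt_scale c f) (pt_scale c g)"
  unfolding pt_scale_def by (rule pt_equiv_map[OF bounded_linear_scaleR_right bounded_linear_ident])

lemma pt_equiv_flip: "pt_equiv f g \<Longrightarrow> pt_equiv (pt_flip f) (pt_flip g)"
  using bounded_bilinear.flip unfolding pt_equiv_iff_lift pt_lift_flip by blast

lemma pt_equiv_add:
  assumes "pt_valid f" "pt_valid f'" "pt_valid g" "pt_valid g'" "pt_equiv f f'" "pt_equiv g g'"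
  shows "pt_equiv (pt_add f g) (pt_add f' g')"
  using assms by (simp add: pt_equiv_iff_lift pt_lift_add)

lemma pt_equiv_add_commute:
  assumes "pt_valid f" "pt_valid g"
  shows "pt_equiv (pt_add f g) (pt_add g f)"
  using assms by (simp add: pt_equiv_iff_lift pt_lift_add add.commute)

lemma pt_equiv_add_interchange:
  assumes "pt_valid f" "pt_valid g" "pt_valid h" "pt_valid k"
  shows "pt_equiv (pt_add (pt_add f g) (pt_add h k)) (pt_add (pt_add f h) (pt_add g k))"
  using assms by (simp add: pt_equiv_iff_lift pt_lift_add ac_simps)

lemma pt_equiv_sign_termwise:
  fixes f g :: "'a::real_normed_vector ptrep"
  assumes "\<And>n. g n = f n \<or> g n = (- fst (f n), - snd (f n))"
  shows "pt_equiv f g"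
  unfolding pt_equiv_iff_lift pt_lift_def
proof (intro allI impI)
  fix B :: "'a \<Rightarrow> 'a \<Rightarrow> real" assume B: "bounded_bilinear B"
  have "B (fst (g n)) (snd (g n)) = B (fst (f n)) (snd (f n))" for n
    using assms[of n] bounded_bilinear.minus_left[OF B] bounded_bilinear.minus_right[OF B] by auto
  then show "(\<Sum>n. B (fst (f n)) (snd (f n))) = (\<Sum>n. B (fst (g n)) (snd (g n)))" by simp
qed

section \<open>The projective norm\<close>

lemma pt_norm_eq_Inf: "pt_norm f = Inf {pt_rep_norm g | g. pt_valid g \<and> pt_equiv f g}"
  by (simp add: pt_norm_def pt_rep_norm_def)

lemma pt_rep_norm_nonneg: "pt_valid f \<Longrightarrow> 0 \<le> pt_rep_norm f"
  unfolding pt_rep_norm_def pt_valid_def by (rule suminf_nonneg) auto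

lemma pt_norm_le_rep_norm: "pt_valid f \<Longrightarrow> pt_norm f \<le> pt_rep_norm f"
  unfolding pt_norm_eq_Inf
  by (rule cInf_lower) (auto simp: pt_equiv_def intro: bdd_belowI[of _ 0] pt_rep_norm_nonneg)

lemma pt_norm_greatest:
  assumes "pt_valid f" "\<And>g. pt_valid g \<Longrightarrow> pt_equiv f g \<Longrightarrow> z \<le> pt_rep_norm g"
  shows "z \<le> pt_norm f"
  unfolding pt_norm_eq_Inf
  using assms by (intro cInf_greatest) (auto simp: pt_equiv_def)

lemma pt_norm_nonneg: "pt_valid f \<Longrightarrow> 0 \<le> pt_norm f"
  by (rule pt_norm_greatest) (auto simp: pt_rep_norm_nonneg)

lemma pt_norm_cong: "pt_equiv f g \<Longrightarrow> pt_norm f = pt_norm g"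
  unfolding pt_norm_def pt_equiv_def by simp

lemma pt_rep_norm_flip: "pt_rep_norm (pt_flip f) = pt_rep_norm f"
  by (simp add: pt_rep_norm_def pt_flip_def mult.commute)

lemma pt_norm_flip_le: "pt_valid f \<Longrightarrow> pt_norm (pt_flip f) \<le> pt_norm f"
proof (rule pt_norm_greatest)
  fix g assume "pt_valid g" "pt_equiv f g"
  then have "pt_norm (pt_flip f) = pt_norm (pt_flip g)"
    by (intro pt_norm_cong pt_equiv_flip)
  also have "\<dots> \<le> pt_rep_norm g"
    using pt_norm_le_rep_norm[of "pt_flip g"] \<open>pt_valid g\<close> by (simp add: pt_rep_norm_flip)
  finally show "pt_norm (pt_flip f) \<le> pt_rep_norm g" .
qed

lemma pt_norm_flip: "pt_valid f \<Longrightarrow> pt_norm (pt_flip f) = pt_norm f"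
  using pt_norm_flip_le[of f] pt_norm_flip_le[of "pt_flip f"] by simp

lemma pt_rep_norm_add:
  "pt_valid f \<Longrightarrow> pt_valid g \<Longrightarrow> pt_rep_norm (pt_add f g) = pt_rep_norm f + pt_rep_norm g"
  unfolding pt_rep_norm_def pt_valid_def
  using sums_pt_add[of "\<lambda>p. norm (fst p) * norm (snd p)" f g] by (simp add: sums_iff)

lemma pt_norm_add_le:
  assumes f: "pt_valid f" and g: "pt_valid g"
  shows "pt_norm (pt_add f g) \<le> pt_norm f + pt_norm g"
proof -
  have "pt_norm (pt_add f g) \<le> pt_rep_norm f' + pt_rep_norm g'"
    if "pt_valid f'" "pt_equiv f f'" "pt_valid g'" "pt_equiv g g'" for f' g'
  proof -
    have "pt_norm (pt_add f g) = pt_norm (pt_add f' g')"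
      using f g that by (intro pt_norm_cong pt_equiv_add)
    also have "\<dots> \<le> pt_rep_norm (pt_add f' g')"
      using that by (intro pt_norm_le_rep_norm) simp
    also have "\<dots> = pt_rep_norm f' + pt_rep_norm g'"
      using that by (simp add: pt_rep_norm_add)
    finally show ?thesis .
  qed
  then have "pt_norm (pt_add f g) - pt_rep_norm g' \<le> pt_norm f"
    if "pt_valid g'" "pt_equiv g g'" for g'
    using that by (intro pt_norm_greatest[OF f]) force
  then have "pt_norm (pt_add f g) - pt_norm f \<le> pt_norm g"
    by (intro pt_norm_greatest[OF g]) force
  then show ?thesis by simp
qed

lemma pt_rep_norm_scale:
  assumes "pt_valid f" "c \<ge> 0"
  shows "pt_rep_norm (pt_scale c f) = c * pt_rep_norm f"
  using assms suminf_mult[of "\<lambda>n. norm (fst (f n)) * norm (snd (f n))" c]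
  by (simp add: pt_valid_def pt_rep_norm_def pt_scale_def mult.assoc)

lemma pt_norm_scale_le:
  assumes f: "pt_valid f" and c: "c > 0"
  shows "pt_norm (pt_scale c f) \<le> c * pt_norm f"
proof -
  have "pt_norm (pt_scale c f) / c \<le> pt_norm f"
  proof (rule pt_norm_greatest[OF f])
    fix g assume g: "pt_valid g" "pt_equiv f g"
    have "pt_norm (pt_scale c f) = pt_norm (pt_scale c g)"
      using g(2) by (intro pt_norm_cong pt_equiv_scale)
    also have "\<dots> \<le> c * pt_rep_norm g"
      using pt_norm_le_rep_norm[of "pt_scale c g"] g(1) c by (simp add: pt_rep_norm_scale)
    finally show "pt_norm (pt_scale c f) / c \<le> pt_rep_norm g"
      using c by (simp add: divide_simps mult.commute)
  qed
  then show ?thesis using c by (simp add: divide_simps mult.commute)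
qed

section \<open>The maps \<pi> and \<pi>\<degree> and the flip\<close>

lemma norm_pt_lift_le:
  fixes B :: "'a::real_normed_vector \<Rightarrow> 'a \<Rightarrow> 'b::banach"
  assumes B: "bounded_bilinear B" and B_le: "\<And>x y. norm (B x y) \<le> norm x * norm y"
    and f: "pt_valid f"
  shows "norm (pt_lift B f) \<le> pt_norm f"
proof (rule pt_norm_greatest[OF f])
  fix g assume g: "pt_valid g" "pt_equiv f g"
  have summable_norms: "summable (\<lambda>n. norm (fst (g n)) * norm (snd (g n)))"
    using g(1) unfolding pt_valid_def .
  have summable_B: "summable (\<lambda>n. norm (B (fst (g n)) (snd (g n))))"
    using summable_norms by (rule summable_comparison_test') (simp add: B_le)
  have "pt_lift B f = pt_lift B g"
    using B f g by (rule pt_lift_equiv)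
  also have "norm \<dots> \<le> (\<Sum>n. norm (B (fst (g n)) (snd (g n))))"
    unfolding pt_lift_def using summable_B by (rule summable_norm)
  also have "\<dots> \<le> pt_rep_norm g"
    unfolding pt_rep_norm_def using B_le summable_B summable_norms by (rule suminf_le)
  finally show "norm (pt_lift B f) \<le> pt_rep_norm g" .
qed

lemma tendsto_pt_lift_zero:
  fixes B :: "'a::real_normed_vector \<Rightarrow> 'a \<Rightarrow> 'b::banach"
  assumes "bounded_bilinear B" "\<And>x y. norm (B x y) \<le> norm x * norm y"
    and "\<And>i. pt_valid (D i)" and "((\<lambda>i. pt_norm (D i)) \<longlongrightarrow> 0) F"
  shows "((\<lambda>i. pt_lift B (D i)) \<longlongrightarrow> 0) F"
  using assms(4) by (rule Lim_null_comparison[rotated]) (simp add: norm_pt_lift_le[OF assms(1-3)])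

lemma pt_pi_eq_lift: "pt_pi f = pt_lift (*) f"
  by (simp add: pt_pi_def pt_lift_def)

lemma pt_pio_eq_lift: "pt_pio f = pt_lift (\<lambda>x y. y * x) f"
  by (simp add: pt_pio_def pt_lift_def)

lemma bounded_bilinear_mult_flip: "bounded_bilinear (\<lambda>x y. y * (x :: 'a::real_normed_algebra))"
  by (rule bounded_bilinear.flip[OF bounded_bilinear_mult])

lemma norm_mult_flip_ineq: "norm (y * x) \<le> norm x * norm (y :: 'a::real_normed_algebra)"
  using norm_mult_ineq[of y x] by (simp add: mult.commute)

lemma pt_lift_commutator:
  fixes t :: "'a::{real_normed_algebra,banach} ptrep"
  assumes t: "pt_valid t"
  shows "pt_lift (*) (pt_commutator a t) = a * pt_pi t - pt_pi t * a"
proof -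
  have s: "summable (\<lambda>n. fst (t n) * snd (t n))"
    using summable_pt_lift[OF bounded_bilinear_mult t] .
  have "pt_lift (*) (pt_lmul a t) = a * pt_pi t"
    using suminf_mult[OF s, of a] by (simp add: pt_lift_def pt_lmul_def pt_pi_def mult.assoc)
  moreover have "pt_lift (*) (pt_rmul t a) = pt_pi t * a"
    using suminf_mult2[OF s, of a] by (simp add: pt_lift_def pt_rmul_def pt_pi_def mult.assoc)
  ultimately show ?thesis
    using t by (simp add: pt_lift_diff[OF bounded_bilinear_mult])
qed

lemma pt_lift_circ_commutator:
  fixes t :: "'a::{real_normed_algebra,banach} ptrep"
  assumes t: "pt_valid t"
  shows "pt_lift (\<lambda>x y. y * x) (pt_circ_commutator a t) = a * pt_pio t - pt_pio t * a"
proof -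
  have s: "summable (\<lambda>n. snd (t n) * fst (t n))"
    using summable_pt_lift[OF bounded_bilinear_mult_flip t] .
  have "pt_lift (\<lambda>x y. y * x) (pt_lcirc a t) = a * pt_pio t"
    using suminf_mult[OF s, of a] by (simp add: pt_lift_def pt_lcirc_def pt_pio_def mult.assoc)
  moreover have "pt_lift (\<lambda>x y. y * x) (pt_rcirc t a) = pt_pio t * a"
    using suminf_mult2[OF s, of a] by (simp add: pt_lift_def pt_rcirc_def pt_pio_def mult.assoc)
  ultimately show ?thesis
    using t by (simp add: pt_lift_diff[OF bounded_bilinear_mult_flip])
qed

lemma tendsto_pi_commutator_zero:
  fixes t :: "'i \<Rightarrow> 'a::{real_normed_algebra,banach} ptrep"
  assumes "\<And>i. pt_valid (t i)" "((\<lambda>i. pt_norm (pt_commutator a (t i))) \<longlongrightarrow> 0) F"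
  shows "((\<lambda>i. a * pt_pi (t i) - pt_pi (t i) * a) \<longlongrightarrow> 0) F"
  using tendsto_pt_lift_zero[OF bounded_bilinear_mult norm_mult_ineq _ assms(2)] assms(1)
  by (simp add: pt_lift_commutator)

lemma tendsto_pio_circ_commutator_zero:
  fixes t :: "'i \<Rightarrow> 'a::{real_normed_algebra,banach} ptrep"
  assumes "\<And>i. pt_valid (t i)" "((\<lambda>i. pt_norm (pt_circ_commutator a (t i))) \<longlongrightarrow> 0) F"
  shows "((\<lambda>i. a * pt_pio (t i) - pt_pio (t i) * a) \<longlongrightarrow> 0) F"
  using tendsto_pt_lift_zero[OF bounded_bilinear_mult_flip norm_mult_flip_ineq _ assms(2)] assms(1)
  by (simp add: pt_lift_circ_commutator)

text \<open>The flip intertwines the two module structures, up to moving a sign from one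
  factor to the other in the subtracted terms.\<close>
lemma pt_norm_circ_commutator:
  fixes t :: "'a::{real_normed_algebra,banach} ptrep"
  assumes "pt_valid t"
  shows "pt_norm (pt_circ_commutator a t) = pt_norm (pt_commutator a (pt_flip t))"
proof -
  have "pt_equiv (pt_flip (pt_circ_commutator a t)) (pt_commutator a (pt_flip t))"
    by (rule pt_equiv_sign_termwise)
      (auto simp: pt_flip_def pt_diff_def pt_lmul_def pt_rmul_def pt_lcirc_def pt_rcirc_def)
  then show ?thesis
    using pt_norm_flip[of "pt_circ_commutator a t"] assms by (simp add: pt_norm_cong)
qed

lemma pt_equiv_commutator:
  assumes "pt_valid f" "pt_valid g" "pt_equiv f g"
  shows "pt_equiv (pt_commutator a f) (pt_commutator a g)"
  unfolding pt_diff_eq_add_neg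
  using assms by (intro pt_equiv_add pt_equiv_lmul pt_equiv_neg pt_equiv_rmul) simp_all

lemma pt_norm_circ_commutator_symmetric:
  fixes t :: "'a::{real_normed_algebra,banach} ptrep"
  assumes "pt_symmetric t" "pt_valid t"
  shows "pt_norm (pt_circ_commutator a t) = pt_norm (pt_commutator a t)"
  using assms pt_equiv_commutator[of "pt_flip t" t a]
  by (simp add: pt_norm_circ_commutator pt_norm_cong pt_symmetric_def)

lemma pt_pio_eq_pi_if_symmetric:
  fixes t :: "'a::{real_normed_algebra,banach} ptrep"
  assumes "pt_symmetric t" "pt_valid t"
  shows "pt_pio t = pt_pi t"
proof -
  have "pt_pio t = pt_lift (*) (pt_flip t)"
    by (simp add: pt_pio_eq_lift pt_lift_flip)
  also have "\<dots> = pt_lift (*) t"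
    using assms by (intro pt_lift_equiv[OF bounded_bilinear_mult]) (simp_all add: pt_symmetric_def)
  finally show ?thesis by (simp add: pt_pi_eq_lift)
qed

section \<open>Symmetrization\<close>

definition pt_symmetrization :: "('a::real_normed_vector) ptrep \<Rightarrow> 'a ptrep" where
  "pt_symmetrization t = pt_add (pt_scale (1/2) t) (pt_flip (pt_scale (1/2) t))"

lemma pt_valid_symmetrization [simp]: "pt_valid t \<Longrightarrow> pt_valid (pt_symmetrization t)"
  by (simp add: pt_symmetrization_def)

lemma pt_symmetric_symmetrization: "pt_valid t \<Longrightarrow> pt_symmetric (pt_symmetrization t)"
  unfolding pt_symmetric_def pt_symmetrization_def pt_flip_add pt_flip_flip
  by (rule pt_equiv_add_commute) simp_all

lemma pt_pi_symmetrization: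
  fixes t :: "'a::{real_normed_algebra,banach} ptrep"
  assumes "pt_valid t"
  shows "pt_pi (pt_symmetrization t) = (1/2) *\<^sub>R pt_pi t + (1/2) *\<^sub>R pt_pio t"
  using assms
  by (simp add: pt_symmetrization_def pt_pi_eq_lift pt_pio_eq_lift pt_lift_flip
      pt_lift_add[OF bounded_bilinear_mult] pt_lift_scale[OF bounded_bilinear_mult]
      pt_lift_scale[OF bounded_bilinear_mult_flip])

lemma pt_norm_commutator_add_le:
  fixes f g :: "'a::{real_normed_algebra,banach} ptrep"
  assumes "pt_valid f" "pt_valid g"
  shows "pt_norm (pt_commutator a (pt_add f g)) \<le> pt_norm (pt_commutator a f) + pt_norm (pt_commutator a g)"
proof -
  have "pt_norm (pt_commutator a (pt_add f g)) = pt_norm (pt_add (pt_commutator a f) (pt_commutator a g))"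
    unfolding pt_diff_eq_add_neg pt_lmul_add pt_rmul_add pt_neg_add
    using assms by (intro pt_norm_cong pt_equiv_add_interchange) simp_all
  also have "\<dots> \<le> pt_norm (pt_commutator a f) + pt_norm (pt_commutator a g)"
    using assms by (intro pt_norm_add_le) simp_all
  finally show ?thesis .
qed

lemma pt_norm_commutator_symmetrization_le:
  fixes t :: "'a::{real_normed_algebra,banach} ptrep"
  assumes t: "pt_valid t"
  shows "pt_norm (pt_commutator a (pt_symmetrization t))
    \<le> 1/2 * pt_norm (pt_commutator a t) + 1/2 * pt_norm (pt_circ_commutator a t)"
proof -
  define u where "u = pt_scale (1/2) t"
  have u: "pt_valid u" using t by (simp add: u_def)
  have "pt_norm (pt_commutator a (pt_symmetrization t))
      \<le> pt_norm (pt_commutator a u) + pt_norm (pt_commutator a (pt_flip u))"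
    unfolding pt_symmetrization_def u_def[symmetric] using u by (intro pt_norm_commutator_add_le) simp_all
  also have "pt_norm (pt_commutator a (pt_flip u)) = pt_norm (pt_circ_commutator a u)"
    using u by (rule pt_norm_circ_commutator[symmetric])
  also have "pt_norm (pt_commutator a u) \<le> 1/2 * pt_norm (pt_commutator a t)"
    unfolding u_def pt_commutator_scale using t by (intro pt_norm_scale_le) simp_all
  also have "pt_norm (pt_circ_commutator a u) \<le> 1/2 * pt_norm (pt_circ_commutator a t)"
    unfolding u_def pt_circ_commutator_scale using t by (intro pt_norm_scale_le) simp_all
  finally show ?thesis by simp
qed

lemma symmetric_approx_diagonal_circ_commutator:
  fixes t :: "'a::{real_normed_algebra,banach} ptrep \<Rightarrow> 'a ptrep"
  assumes "approx_diagonal t F" "\<And>i. pt_symmetric (t i)"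
  shows "((\<lambda>i. pt_norm (pt_circ_commutator a (t i))) \<longlongrightarrow> 0) F"
  using assms by (simp add: approx_diagonal_def pt_norm_circ_commutator_symmetric)

lemma symmetric_approx_diagonal_pio:
  fixes t :: "'a::{real_normed_algebra,banach} ptrep \<Rightarrow> 'a ptrep"
  assumes "approx_diagonal t F" "\<And>i. pt_symmetric (t i)"
  shows "((\<lambda>i. a * pt_pio (t i)) \<longlongrightarrow> a) F"
proof -
  have valid: "\<And>i. pt_valid (t i)"
    and commutator: "((\<lambda>i. pt_norm (pt_commutator a (t i))) \<longlongrightarrow> 0) F"
    and unit: "((\<lambda>i. pt_pi (t i) * a) \<longlongrightarrow> a) F"
    using assms(1) by (simp_all add: approx_diagonal_def)
  have "((\<lambda>i. (a * pt_pi (t i) - pt_pi (t i) * a) + pt_pi (t i) * a) \<longlongrightarrow> 0 + a) F"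
    using tendsto_pi_commutator_zero[OF valid commutator] unit by (rule tendsto_add)
  then show ?thesis
    using assms(2) valid by (simp add: pt_pio_eq_pi_if_symmetric)
qed

lemma approx_diagonal_symmetrization:
  fixes t :: "'a::{real_normed_algebra,banach} ptrep \<Rightarrow> 'a ptrep"
  assumes diag: "approx_diagonal t F"
    and circ_commutator: "\<And>a. ((\<lambda>i. pt_norm (pt_circ_commutator a (t i))) \<longlongrightarrow> 0) F"
    and circ_unit: "\<And>a. ((\<lambda>i. a * pt_pio (t i)) \<longlongrightarrow> a) F"
  shows "approx_diagonal (\<lambda>i. pt_symmetrization (t i)) F"
proof -
  have valid: "\<And>i. pt_valid (t i)"
    and commutator: "\<And>a. ((\<lambda>i. pt_norm (pt_commutator a (t i))) \<longlongrightarrow> 0) F"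
    and unit: "\<And>a. ((\<lambda>i. pt_pi (t i) * a) \<longlongrightarrow> a) F"
    using diag by (simp_all add: approx_diagonal_def)
  have "((\<lambda>i. pt_norm (pt_commutator a (pt_symmetrization (t i)))) \<longlongrightarrow> 0) F" for a
  proof (rule tendsto_sandwich[OF _ _ tendsto_const])
    show "\<forall>\<^sub>F i in F. 0 \<le> pt_norm (pt_commutator a (pt_symmetrization (t i)))"
      using valid by (simp add: pt_norm_nonneg)
    show "\<forall>\<^sub>F i in F. pt_norm (pt_commutator a (pt_symmetrization (t i)))
        \<le> 1/2 * pt_norm (pt_commutator a (t i)) + 1/2 * pt_norm (pt_circ_commutator a (t i))"
      using valid by (intro always_eventually allI pt_norm_commutator_symmetrization_le)
    show "((\<lambda>i. 1/2 * pt_norm (pt_commutator a (t i)) + 1/2 * pt_norm (pt_circ_commutator a (t i)))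
        \<longlongrightarrow> 0) F"
      using tendsto_add[OF tendsto_mult[OF tendsto_const commutator]
          tendsto_mult[OF tendsto_const circ_commutator], of "1/2" a "1/2" a]
      by simp
  qed
  moreover have "((\<lambda>i. pt_pi (pt_symmetrization (t i)) * a) \<longlongrightarrow> a) F" for a
  proof -
    have "((\<lambda>i. a * pt_pio (t i) - (a * pt_pio (t i) - pt_pio (t i) * a)) \<longlongrightarrow> a - 0) F"
      using circ_unit tendsto_pio_circ_commutator_zero[OF valid circ_commutator] by (rule tendsto_diff)
    then have "((\<lambda>i. (1/2) *\<^sub>R (pt_pi (t i) * a) + (1/2) *\<^sub>R (pt_pio (t i) * a))
        \<longlongrightarrow> (1/2) *\<^sub>R a + (1/2) *\<^sub>R a) F"
      using unit by (intro tendsto_intros) simp_all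
    then show ?thesis
      using valid by (simp add: pt_pi_symmetrization distrib_right scaleR_left_distrib[symmetric])
  qed
  ultimately show ?thesis
    using diag valid by (simp add: approx_diagonal_def)
qed

theorem proposition3p2:
  shows "symm_pseudo_amenable TYPE('a::{real_normed_algebra,banach}) \<longleftrightarrow>
    (\<exists>(t::'a ptrep \<Rightarrow> 'a ptrep) F. F \<noteq> bot \<and> (\<forall>i. pt_valid (t i)) \<and>
      (\<forall>a. ((\<lambda>i. pt_norm (pt_diff (pt_lmul a (t i)) (pt_rmul (t i) a))) \<longlongrightarrow> 0) F) \<and>
      (\<forall>a. ((\<lambda>i. pt_pi (t i) * a) \<longlongrightarrow> a) F) \<and>
      (\<forall>a. ((\<lambda>i. pt_norm (pt_diff (pt_lcirc a (t i)) (pt_rcirc (t i) a))) \<longlongrightarrow> 0) F) \<and>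
      (\<forall>a. ((\<lambda>i. a * pt_pio (t i)) \<longlongrightarrow> a) F))"
  (is "_ \<longleftrightarrow> ?conditions")
proof
  assume "symm_pseudo_amenable TYPE('a)"
  then obtain t :: "'a ptrep \<Rightarrow> 'a ptrep" and F
    where diag: "approx_diagonal t F" and symmetric: "\<And>i. pt_symmetric (t i)"
    by (auto simp: symm_pseudo_amenable_def)
  show ?conditions
    using diag symmetric_approx_diagonal_circ_commutator[OF diag symmetric]
      symmetric_approx_diagonal_pio[OF diag symmetric]
    unfolding approx_diagonal_def by blast
next
  assume ?conditions
  then obtain t :: "'a ptrep \<Rightarrow> 'a ptrep" and F where diag: "approx_diagonal t F"
    and "\<And>a. ((\<lambda>i. pt_norm (pt_circ_commutator a (t i))) \<longlongrightarrow> 0) F"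
    and "\<And>a. ((\<lambda>i. a * pt_pio (t i)) \<longlongrightarrow> a) F"
    unfolding approx_diagonal_def by blast
  then have "approx_diagonal (\<lambda>i. pt_symmetrization (t i)) F"
    by (rule approx_diagonal_symmetrization)
  moreover have "pt_symmetric (pt_symmetrization (t i))" for i
    using diag by (simp add: approx_diagonal_def pt_symmetric_symmetrization)
  ultimately show "symm_pseudo_amenable TYPE('a)"
    unfolding symm_pseudo_amenable_def by blast
qed

end
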